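(* Let $q>0$, $q\neq1$, $\nu,t\in\mathbb{R}$. For every integer $N\ge0$, $$H_N(x,\nu t;q)=e^{\nu tD_x^2}x^N,$$ where $e^{aD_x^2}:=\sum_{n\ge0}\frac{a^n}{n!}D_x^{2n}$ (a finite sum on polynomials). In particular $\phi(x,t)=e^{\nu tD_x^2}x^N$ solves $\partial_t\phi-\nu D_x^2\phi=0$ with $\phi(x,0)=x^N$.
   Context: For $n\ge 0$ let $[n]_q=\frac{q^n-1}{q-1}$, $[0]_q!=1$, $[n]_q!=[1]_q\cdots[n]_q$, and $e_q(z)=\sum_{n\ge0}z^n/[n]_q!$. The $q$-derivative acts by $D_x x^n=[n]_qx^{n-1}$ (equivalently $D_xf(x)=\frac{f(qx)-f(x)}{(q-1)x}$). The $q$-Hermite polynomials $H_N(y;q)$ are defined by $e^{-s^2}e_q([2]_q s y)=\sum_{N\ge0}H_N(y;q)\,s^N/[N]_q!$ (formal power series in $s$), and the $q$-Kampe-de Feriet polynomials by $H_N(x,\nu t;q)=(-\nu t)^{N/2}H_N\big(\tfrac{x}{[2]_q\sqrt{-\nu t}};q\big)$, understood as the resulting polynomial in $x$ and $\nu t$. *)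

theory Defs
  imports Complex_Main "HOL-Computational_Algebra.Polynomial" "HOL-Computational_Algebra.Formal_Power_Series"
begin

definition qnum :: "real \<Rightarrow> nat \<Rightarrow> real" where
  "qnum q n = (q ^ n - 1) / (q - 1)"

definition qfact :: "real \<Rightarrow> nat \<Rightarrow> real" where
  "qfact q n = (\<Prod>k\<in>{1..n}. qnum q k)"

definition qexp_fps :: "real \<Rightarrow> complex \<Rightarrow> complex fps" where
  "qexp_fps q z = Abs_fps (\<lambda>n. z ^ n / complex_of_real (qfact q n))"

(* q-Hermite polynomials: e^{-s^2} e_q([2]_q s y) = sum_N H_N(y;q) s^N / [N]_q! *)
definition qHermite :: "nat \<Rightarrow> complex \<Rightarrow> real \<Rightarrow> complex" where
  "qHermite N y q = complex_of_real (qfact q N) *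
     fps_nth ((fps_exp (-1) oo (fps_X ^ 2)) * qexp_fps q (complex_of_real (qnum q 2) * y)) N"

definition qKdF_raw :: "nat \<Rightarrow> real \<Rightarrow> real \<Rightarrow> real \<Rightarrow> complex" where
  "qKdF_raw N x a q = csqrt (complex_of_real (- a)) ^ N *
     qHermite N (complex_of_real x / (complex_of_real (qnum q 2) * csqrt (complex_of_real (- a)))) q"

(* q-Kampe-de Feriet polynomial H_N(x, a; q) (a = nu t), understood as the polynomial in a,
   i.e. at a = 0 its value is the continuous extension (limit). *)
definition qKdF :: "nat \<Rightarrow> real \<Rightarrow> real \<Rightarrow> real \<Rightarrow> complex" where
  "qKdF N x a q = (if a \<noteq> 0 then qKdF_raw N x a q
                   else Lim (at (0::real)) (\<lambda>b. qKdF_raw N x b q))"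

definition qD :: "real \<Rightarrow> real poly \<Rightarrow> real poly" where
  "qD q p = (\<Sum>n\<le>degree p. monom (qnum q n * coeff p n) (n - 1))"

(* e^{a D^2} p = sum_n a^n/n! D^{2n} p  (finite on polynomials: terms with n > degree p vanish) *)
definition qexpD2 :: "real \<Rightarrow> real \<Rightarrow> real poly \<Rightarrow> real poly" where
  "qexpD2 a q p = (\<Sum>n\<le>degree p. smult (a ^ n / fact n) ((qD q ^^ (2 * n)) p))"

end

theory Submission
  imports Defs
begin

text \<open>Both sides are computed as the same explicit polynomial. The q-derivative sends
  x^N to [N]_q x^(N-1), so e^(a D^2) x^N is the sum over n of
  a^n/n! [N]_q [N-1]_q ... [N-2n+1]_q x^(N-2n). Expanding the Cauchy product that defines H_N
  gives the same sum once the argument is rescaled by sqrt(-a): the surplus powers of sqrt(-a)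
  pair up with (-1)^n into a^n. The value at a = 0 is then the limit of a polynomial in a, and
  the heat equation holds termwise, since d/da and D^2 both shift the summation index by one.\<close>

lemma qnum_nonzero:
  assumes "q > 0" "q \<noteq> 1" "k > 0"
  shows "qnum q k \<noteq> 0"
proof
  assume "qnum q k = 0"
  then have "q ^ k = 1 ^ k" using assms by (simp add: qnum_def)
  with assms have "q = 1" using power_eq_iff_eq_base[of k q 1] by simp
  with \<open>q \<noteq> 1\<close> show False by simp
qed

lemma qfact_nonzero: "q > 0 \<Longrightarrow> q \<noteq> 1 \<Longrightarrow> qfact q n \<noteq> 0"
  unfolding qfact_def using qnum_nonzero[of q] by (auto simp: prod_zero_iff)

lemma qfact_Suc: "qfact q (Suc n) = qfact q n * qnum q (Suc n)"
  by (simp add: qfact_def prod.cl_ivl_Suc)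

definition qfalling :: "real \<Rightarrow> nat \<Rightarrow> nat \<Rightarrow> real" where
  "qfalling q N k = (\<Prod>i<k. qnum q (N - i))"

lemma qfalling_eq_0: "N < k \<Longrightarrow> qfalling q N k = 0"
  unfolding qfalling_def by (rule prod_zero) (auto intro!: bexI[of _ N] simp: qnum_def)

lemma qfact_eq_qfalling:
  assumes "k \<le> N"
  shows "qfact q N = qfact q (N - k) * qfalling q N k"
proof -
  have "qfact q (m + k) = qfact q m * qfalling q (m + k) k" for m
  proof (induction k)
    case (Suc k)
    have "qfalling q (m + Suc k) (Suc k) = qnum q (m + Suc k) * qfalling q (m + k) k"
      unfolding qfalling_def by (subst prod.lessThan_Suc_shift) simp
    then show ?case using Suc by (simp add: qfact_Suc)
  qed (simp add: qfalling_def)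
  from this[of "N - k"] assms show ?thesis by simp
qed

lemma coeff_qD: "coeff (qD q p) k = qnum q (Suc k) * coeff p (Suc k)"
proof -
  have "coeff (qD q p) k = (\<Sum>n\<le>degree p. if n - 1 = k then qnum q n * coeff p n else 0)"
    by (simp add: qD_def coeff_sum coeff_monom)
  also have "\<dots> = (\<Sum>n\<le>degree p. if n = Suc k then qnum q n * coeff p n else 0)"
    by (rule sum.cong) (auto simp: qnum_def split: nat_diff_split)
  also have "\<dots> = qnum q (Suc k) * coeff p (Suc k)"
    by (auto simp: coeff_eq_0)
  finally show ?thesis .
qed

lemma qD_add: "qD q (p + r) = qD q p + qD q r"
  by (simp add: poly_eq_iff coeff_qD algebra_simps)

lemma qD_sum: "qD q (\<Sum>i\<in>A. f i) = (\<Sum>i\<in>A. qD q (f i))"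
  by (induction A rule: infinite_finite_induct) (auto simp: qD_add poly_eq_iff coeff_qD)

lemma qD_monom: "qD q (monom c m) = monom (qnum q m * c) (m - 1)"
  by (cases m) (auto simp: poly_eq_iff coeff_qD coeff_monom qnum_def)

lemma funpow_qD_monom: "(qD q ^^ k) (monom c N) = monom (c * qfalling q N k) (N - k)"
  by (induction k) (auto simp: qD_monom qfalling_def algebra_simps diff_Suc)

definition qKdF_poly :: "nat \<Rightarrow> real \<Rightarrow> real \<Rightarrow> real poly" where
  "qKdF_poly N a q = (\<Sum>n\<le>N. monom (a ^ n / fact n * qfalling q N (2 * n)) (N - 2 * n))"

lemma poly_qKdF_poly:
  "poly (qKdF_poly N a q) x = (\<Sum>n\<le>N. a ^ n / fact n * qfalling q N (2 * n) * x ^ (N - 2 * n))"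
  by (simp add: qKdF_poly_def poly_sum poly_monom)

lemma qexpD2_monom_one: "qexpD2 a q (monom 1 N) = qKdF_poly N a q"
  by (simp add: qexpD2_def qKdF_poly_def degree_monom_eq funpow_qD_monom smult_monom)

lemma qKdF_poly_0: "qKdF_poly N 0 q = monom 1 N"
proof -
  have "qKdF_poly N 0 q = (\<Sum>n\<le>N. if n = 0 then monom 1 N else 0)"
    unfolding qKdF_poly_def by (rule sum.cong) (auto simp: qfalling_def)
  then show ?thesis by simp
qed

lemma qD_qD_qKdF_poly:
  "qD q (qD q (qKdF_poly N a q))
     = (\<Sum>n<N. monom (a ^ n / fact n * qfalling q N (2 * Suc n)) (N - 2 * Suc n))"
proof -
  have "qD q (qD q (qKdF_poly N a q))
     = (\<Sum>n\<le>N. monom (a ^ n / fact n * qfalling q N (2 * Suc n)) (N - 2 * Suc n))"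
    by (simp add: qKdF_poly_def qD_sum qD_monom qfalling_def algebra_simps diff_Suc
        split: nat.split)
  also have "\<dots> = (\<Sum>n<N. monom (a ^ n / fact n * qfalling q N (2 * Suc n)) (N - 2 * Suc n))"
    by (simp add: lessThan_Suc_atMost[symmetric] qfalling_eq_0)
  finally show ?thesis .
qed

lemma has_real_derivative_exp_partial_sum:
  "((\<lambda>a. \<Sum>n\<le>N. a ^ n / fact n * b n) has_real_derivative
     (\<Sum>n<N. a ^ n / fact n * b (Suc n))) (at a)"
proof -
  have "((\<lambda>a. \<Sum>n\<le>N. a ^ n / fact n * b n) has_real_derivative
     (\<Sum>n\<le>N. of_nat n * a ^ (n - 1) / fact n * b n)) (at a)"
    by (auto intro!: derivative_eq_intros sum.cong)
  also have "(\<Sum>n\<le>N. of_nat n * a ^ (n - 1) / fact n * b n)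
      = (\<Sum>n<N. of_nat (Suc n) * a ^ n / fact (Suc n) * b (Suc n))"
    by (cases N) (simp_all only: sum.atMost_Suc_shift lessThan_Suc_atMost, simp_all)
  also have "\<dots> = (\<Sum>n<N. a ^ n / fact n * b (Suc n))"
    by (rule sum.cong) (simp_all add: field_simps del: of_nat_Suc)
  finally show ?thesis .
qed

lemma qKdF_poly_heat_equation:
  "((\<lambda>a. poly (qKdF_poly N a q) x) has_real_derivative
     poly (qD q (qD q (qKdF_poly N a q))) x) (at a)"
  using has_real_derivative_exp_partial_sum
    [where b = "\<lambda>n. qfalling q N (2 * n) * x ^ (N - 2 * n)"]
  by (simp add: poly_qKdF_poly qD_qD_qKdF_poly poly_sum poly_monom mult.assoc)

lemma fps_nth_exp_neg_X2:
  "fps_nth ((fps_exp (-1) oo fps_X ^ 2) :: complex fps) k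
     = (\<Sum>i\<le>N. if k = 2 * i then (-1) ^ i / of_nat (fact i) else 0)" if "k \<le> N"
proof -
  have "fps_nth ((fps_exp (-1) oo fps_X ^ 2) :: complex fps) k
     = (\<Sum>i=0..k. if k = 2 * i then (-1) ^ i / of_nat (fact i) else 0)"
    by (simp add: fps_compose_nth power_mult[symmetric] fps_X_power_nth if_distrib cong: if_cong)
  also have "\<dots> = (\<Sum>i\<le>N. if k = 2 * i then (-1) ^ i / of_nat (fact i) else 0)"
    using that by (intro sum.mono_neutral_left) auto
  finally show ?thesis .
qed

lemma fps_nth_exp_neg_X2_times:
  "fps_nth ((fps_exp (-1) oo fps_X ^ 2) * f :: complex fps) N
     = (\<Sum>i\<le>N. if 2 * i \<le> N then (-1) ^ i / of_nat (fact i) * fps_nth f (N - 2 * i) else 0)"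
proof -
  let ?A = "\<lambda>i::nat. (-1) ^ i / of_nat (fact i) :: complex"
  have "fps_nth ((fps_exp (-1) oo fps_X ^ 2) * f) N
      = (\<Sum>k=0..N. \<Sum>i\<le>N. if k = 2 * i then ?A i * fps_nth f (N - k) else 0)"
    by (auto simp: fps_mult_nth fps_nth_exp_neg_X2 sum_distrib_right intro!: sum.cong)
  also have "\<dots> = (\<Sum>i\<le>N. \<Sum>k=0..N. if k = 2 * i then ?A i * fps_nth f (N - k) else 0)"
    by (rule sum.swap)
  also have "\<dots> = (\<Sum>i\<le>N. if 2 * i \<le> N then ?A i * fps_nth f (N - 2 * i) else 0)"
    by (rule sum.cong) (auto simp: sum.delta')
  finally show ?thesis .
qed

lemma qHermite_eq_sum:
  assumes "q > 0" "q \<noteq> 1"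
  shows "qHermite N y q = (\<Sum>i\<le>N. (-1) ^ i / of_nat (fact i)
           * of_real (qfalling q N (2 * i)) * (of_real (qnum q 2) * y) ^ (N - 2 * i))"
proof -
  let ?z = "of_real (qnum q 2) * y"
  have "of_real (qfact q N) * (if 2 * i \<le> N then (-1) ^ i / of_nat (fact i)
          * fps_nth (qexp_fps q ?z) (N - 2 * i) else 0)
      = (-1) ^ i / of_nat (fact i) * of_real (qfalling q N (2 * i)) * ?z ^ (N - 2 * i)" for i
  proof (cases "2 * i \<le> N")
    case True
    then have "qfact q N = qfact q (N - 2 * i) * qfalling q N (2 * i)"
      by (rule qfact_eq_qfalling)
    with True qfact_nonzero[OF assms, of "N - 2 * i"] show ?thesis
      by (simp add: qexp_fps_def)
  qed (simp add: qfalling_eq_0)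
  then show ?thesis
    by (simp add: qHermite_def fps_nth_exp_neg_X2_times sum_distrib_left)
qed

lemma qKdF_raw_eq_poly:
  assumes q: "q > 0" "q \<noteq> 1" and "a \<noteq> 0"
  shows "qKdF_raw N x a q = of_real (poly (qKdF_poly N a q) x)"
proof -
  define c where "c = csqrt (of_real (- a))"
  have c2: "c ^ 2 = of_real (- a)" and "c \<noteq> 0"
    using \<open>a \<noteq> 0\<close> by (simp_all add: c_def)
  have q2: "qnum q 2 \<noteq> 0" using qnum_nonzero[OF q, of 2] by simp
  have term_eq: "c ^ N * ((-1) ^ i / of_nat (fact i) * of_real (qfalling q N (2 * i))
        * (of_real x / c) ^ (N - 2 * i))
      = of_real (a ^ i / fact i * qfalling q N (2 * i) * x ^ (N - 2 * i))" for i
  proof (cases "2 * i \<le> N")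
    case True
    have pow: "c ^ N * (of_real x / c) ^ (N - 2 * i) = (c ^ 2) ^ i * of_real x ^ (N - 2 * i)"
    proof -
      have "c ^ N = (c ^ 2) ^ i * c ^ (N - 2 * i)"
        using True by (metis le_add_diff_inverse power_add power_mult)
      with \<open>c \<noteq> 0\<close> show ?thesis by (simp add: power_divide)
    qed
    have sign: "(-1::complex) ^ i * (c ^ 2) ^ i = of_real a ^ i"
      by (simp add: c2 flip: power_mult_distrib)
    have "c ^ N * ((-1) ^ i / of_nat (fact i) * of_real (qfalling q N (2 * i))
        * (of_real x / c) ^ (N - 2 * i))
      = (-1) ^ i * (c ^ N * (of_real x / c) ^ (N - 2 * i))
        * of_real (qfalling q N (2 * i)) / of_nat (fact i)"
      by (simp only: mult_ac times_divide_eq_left times_divide_eq_right)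
    also have "\<dots> = of_real (a ^ i / fact i * qfalling q N (2 * i) * x ^ (N - 2 * i))"
      unfolding pow mult.assoc[symmetric] sign by simp
    finally show ?thesis .
  qed (simp add: qfalling_eq_0)
  have "qKdF_raw N x a q = c ^ N * qHermite N (of_real x / (of_real (qnum q 2) * c)) q"
    by (simp add: qKdF_raw_def c_def)
  also have "\<dots> = (\<Sum>i\<le>N. c ^ N * ((-1) ^ i / of_nat (fact i) * of_real (qfalling q N (2 * i))
        * (of_real x / c) ^ (N - 2 * i)))"
    using q2 by (simp add: qHermite_eq_sum[OF q] sum_distrib_left)
  also have "\<dots> = (\<Sum>i\<le>N. of_real (a ^ i / fact i * qfalling q N (2 * i) * x ^ (N - 2 * i)))"
    by (rule sum.cong[OF refl term_eq])
  finally show ?thesis by (simp add: poly_qKdF_poly)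
qed

lemma qKdF_eq_poly:
  assumes "q > 0" "q \<noteq> 1"
  shows "qKdF N x a q = of_real (poly (qKdF_poly N a q) x)"
proof (cases "a = 0")
  case True
  have lim: "((\<lambda>b. of_real (poly (qKdF_poly N b q) x) :: complex) \<longlongrightarrow>
      of_real (poly (qKdF_poly N 0 q) x)) (at 0)"
    unfolding poly_qKdF_poly by (intro tendsto_intros) auto
  have ev: "\<forall>\<^sub>F b in at 0. of_real (poly (qKdF_poly N b q) x) = qKdF_raw N x b q"
    unfolding eventually_at_filter using qKdF_raw_eq_poly[OF assms] by simp
  have "((\<lambda>b. qKdF_raw N x b q) \<longlongrightarrow> of_real (poly (qKdF_poly N 0 q) x)) (at 0)"
    using lim tendsto_cong[OF ev] by simp
  with True show ?thesis
    by (simp add: qKdF_def tendsto_Lim)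
qed (simp add: qKdF_def qKdF_raw_eq_poly[OF assms])

theorem mainTheorem11:
  fixes q \<nu> t :: real and N :: nat
  assumes "q > 0" and "q \<noteq> 1"
  shows "(\<forall>x::real. qKdF N x (\<nu> * t) q
            = complex_of_real (poly (qexpD2 (\<nu> * t) q (monom 1 N)) x))
       \<and> (\<forall>(x::real) (s::real).
            ((\<lambda>s. poly (qexpD2 (\<nu> * s) q (monom 1 N)) x) has_real_derivative
               \<nu> * poly (qD q (qD q (qexpD2 (\<nu> * s) q (monom 1 N)))) x) (at s))
       \<and> (\<forall>x::real. poly (qexpD2 (\<nu> * 0) q (monom 1 N)) x = x ^ N)"
proof (intro conjI allI)
  fix x s :: real
  show "qKdF N x (\<nu> * t) q = complex_of_real (poly (qexpD2 (\<nu> * t) q (monom 1 N)) x)"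
    by (simp add: qexpD2_monom_one qKdF_eq_poly[OF assms])
  have "((\<lambda>s. \<nu> * s) has_real_derivative \<nu>) (at s)"
    by (auto intro!: derivative_eq_intros)
  from DERIV_chain2[OF qKdF_poly_heat_equation this]
  show "((\<lambda>s. poly (qexpD2 (\<nu> * s) q (monom 1 N)) x) has_real_derivative
          \<nu> * poly (qD q (qD q (qexpD2 (\<nu> * s) q (monom 1 N)))) x) (at s)"
    by (simp add: qexpD2_monom_one mult.commute)
  show "poly (qexpD2 (\<nu> * 0) q (monom 1 N)) x = x ^ N"
    by (simp add: qexpD2_monom_one qKdF_poly_0 poly_monom)
qed

end
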